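(* Let $\mathcal{A}=(\mathcal{T},c)$ be a DPA with $\mathcal{T}=(\Sigma,Q,\delta,q_0)$, let $\mathcal{D}$ be a DPA with $D:=L(\mathcal{D})$, let $\mathcal{T}'=(\Sigma,Q',\delta',q_0')$ be a deterministic transition system and $h:\mathcal{T}\to\mathcal{T}'$ a surjective homomorphism. Define $\mathcal{F}_0'=\{R'\subseteq Q'\mid \exists\alpha\in L(\mathcal{A})\setminus D: h(\mathrm{Inf}_{\mathcal{A}}(\alpha))=R'\}$ and $\mathcal{F}_1'=\{R'\subseteq Q'\mid \exists\alpha\in (\Sigma^\omega\setminus L(\mathcal{A}))\setminus D: h(\mathrm{Inf}_{\mathcal{A}}(\alpha))=R'\}$, where $h(P)=\{h(q)\mid q\in P\}$. Then for every priority function $c':Q'\to\mathbb{N}$: $L(\mathcal{T}',c')\equiv_D L(\mathcal{T},c)$ if and only if $c'$ is consistent with $(\mathcal{F}_0',\mathcal{F}_1')$, i.e., $\max c'(R')$ is even for all $R'\in\mathcal{F}_0'$ and odd for all $R'\in\mathcal{F}_1'$.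
   Context: A deterministic transition system is $\mathcal{T}=(\Sigma,Q,\delta,q_0)$ with finite alphabet, finite state set, transition function $\delta:Q\times\Sigma\to Q$, initial state $q_0$, all states reachable. $\mathrm{Inf}_{\mathcal{T}}(\alpha)$ (or $\mathrm{Inf}_{\mathcal{A}}(\alpha)$) is the set of states visited infinitely often by the run of $\alpha\in\Sigma^\omega$ from $q_0$. A DPA $(\mathcal{T},c)$ with $c:Q\to\mathbb{N}$ accepts those $\alpha$ for which $\max c(\mathrm{Inf}_{\mathcal{T}}(\alpha))$ is even, where $c(P)=\{c(p)\mid p\in P\}$. A homomorphism $h:\mathcal{T}\to\mathcal{T}'$ is a map $h:Q\to Q'$ with $h(q_0)=q_0'$ and $h(\delta(q,a))=\delta'(h(q),a)$. $L\equiv_D L'$ means $L\setminus D=L'\setminus D$. *)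

theory Defs
  imports Main
begin

definition dts :: "'a set \<Rightarrow> 'q set \<Rightarrow> ('q \<Rightarrow> 'a \<Rightarrow> 'q) \<Rightarrow> 'q \<Rightarrow> bool" where
  "dts \<Sigma> Q \<delta> q0 \<longleftrightarrow> finite \<Sigma> \<and> finite Q \<and> q0 \<in> Q \<and>
     (\<forall>q\<in>Q. \<forall>a\<in>\<Sigma>. \<delta> q a \<in> Q) \<and>
     (\<forall>q\<in>Q. \<exists>w. set w \<subseteq> \<Sigma> \<and> foldl \<delta> q0 w = q)"

definition omega_words :: "'a set \<Rightarrow> (nat \<Rightarrow> 'a) set" where
  "omega_words \<Sigma> = {\<alpha>. \<forall>n. \<alpha> n \<in> \<Sigma>}"

fun run :: "('q \<Rightarrow> 'a \<Rightarrow> 'q) \<Rightarrow> 'q \<Rightarrow> (nat \<Rightarrow> 'a) \<Rightarrow> nat \<Rightarrow> 'q" where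
  "run \<delta> q \<alpha> 0 = q"
| "run \<delta> q \<alpha> (Suc n) = \<delta> (run \<delta> q \<alpha> n) (\<alpha> n)"

definition Inf_states :: "('q \<Rightarrow> 'a \<Rightarrow> 'q) \<Rightarrow> 'q \<Rightarrow> (nat \<Rightarrow> 'a) \<Rightarrow> 'q set" where
  "Inf_states \<delta> q0 \<alpha> = {q. \<exists>\<^sub>\<infinity>n. run \<delta> q0 \<alpha> n = q}"

definition dpa_lang :: "'a set \<Rightarrow> ('q \<Rightarrow> 'a \<Rightarrow> 'q) \<Rightarrow> 'q \<Rightarrow> ('q \<Rightarrow> nat) \<Rightarrow> (nat \<Rightarrow> 'a) set" where
  "dpa_lang \<Sigma> \<delta> q0 c = {\<alpha> \<in> omega_words \<Sigma>. even (Max (c ` Inf_states \<delta> q0 \<alpha>))}"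

definition dts_hom :: "'a set \<Rightarrow> 'q set \<Rightarrow> ('q \<Rightarrow> 'a \<Rightarrow> 'q) \<Rightarrow> 'q \<Rightarrow>
    'p set \<Rightarrow> ('p \<Rightarrow> 'a \<Rightarrow> 'p) \<Rightarrow> 'p \<Rightarrow> ('q \<Rightarrow> 'p) \<Rightarrow> bool" where
  "dts_hom \<Sigma> Q \<delta> q0 Q' \<delta>' q0' h \<longleftrightarrow> (\<forall>q\<in>Q. h q \<in> Q') \<and> h q0 = q0' \<and>
     (\<forall>q\<in>Q. \<forall>a\<in>\<Sigma>. h (\<delta> q a) = \<delta>' (h q) a)"

definition equiv_mod :: "(nat \<Rightarrow> 'a) set \<Rightarrow> (nat \<Rightarrow> 'a) set \<Rightarrow> (nat \<Rightarrow> 'a) set \<Rightarrow> bool" where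
  "equiv_mod D L L' \<longleftrightarrow> L - D = L' - D"

definition consistent :: "('p \<Rightarrow> nat) \<Rightarrow> 'p set set \<Rightarrow> 'p set set \<Rightarrow> bool" where
  "consistent c' F0 F1 \<longleftrightarrow> (\<forall>R\<in>F0. even (Max (c' ` R))) \<and> (\<forall>R\<in>F1. odd (Max (c' ` R)))"

end

theory Submission
  imports Defs
begin

text \<open>A homomorphism \<open>h\<close> maps the run of \<open>\<T>\<close> on \<open>\<alpha>\<close> pointwise onto the run of \<open>\<T>'\<close> on
  \<open>\<alpha>\<close>, and as \<open>Q\<close> is finite, a state of \<open>\<T>'\<close> is visited infinitely often iff one of its
  preimages is. So the infinity set of \<open>\<alpha>\<close> in \<open>\<T>'\<close> is the \<open>h\<close>-image of that in \<open>\<T>\<close>, and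
  \<open>L(\<T>', c') = L(\<T>, c' \<circ> h)\<close>. Outside \<open>D\<close> the two languages therefore agree iff \<open>c'\<close>
  gives the right parity to every such image set, which is consistency with \<open>(\<F>\<^sub>0', \<F>\<^sub>1')\<close>.\<close>

lemma run_in_states:
  assumes "dts \<Sigma> Q \<delta> q0" "\<alpha> \<in> omega_words \<Sigma>"
  shows "run \<delta> q0 \<alpha> n \<in> Q"
  using assms by (induction n) (auto simp: dts_def omega_words_def)

lemma Inf_states_subset:
  assumes "dts \<Sigma> Q \<delta> q0" "\<alpha> \<in> omega_words \<Sigma>"
  shows "Inf_states \<delta> q0 \<alpha> \<subseteq> Q"
  using run_in_states[OF assms] by (auto simp: Inf_states_def dest: frequently_ex)

lemma run_hom:
  assumes "dts \<Sigma> Q \<delta> q0" "dts_hom \<Sigma> Q \<delta> q0 Q' \<delta>' q0' h" "\<alpha> \<in> omega_words \<Sigma>"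
  shows "run \<delta>' q0' \<alpha> n = h (run \<delta> q0 \<alpha> n)"
proof (induction n)
  case 0
  then show ?case using assms(2) by (simp add: dts_hom_def)
next
  case (Suc n)
  have "run \<delta> q0 \<alpha> n \<in> Q" "\<alpha> n \<in> \<Sigma>"
    using run_in_states[OF assms(1,3)] assms(3) by (auto simp: omega_words_def)
  then show ?case using Suc assms(2) by (simp add: dts_hom_def)
qed

lemma frequently_values_image:
  assumes "finite Q" "\<And>n. f n \<in> Q"
  shows "{p. \<exists>\<^sub>\<infinity>n. h (f n) = p} = h ` {q. \<exists>\<^sub>\<infinity>n. f n = q}"
proof
  show "h ` {q. \<exists>\<^sub>\<infinity>n. f n = q} \<subseteq> {p. \<exists>\<^sub>\<infinity>n. h (f n) = p}"
    by (auto elim: frequently_elim1)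
next
  show "{p. \<exists>\<^sub>\<infinity>n. h (f n) = p} \<subseteq> h ` {q. \<exists>\<^sub>\<infinity>n. f n = q}"
  proof
    fix p
    assume "p \<in> {p. \<exists>\<^sub>\<infinity>n. h (f n) = p}"
    then have "infinite {n. h (f n) = p}"
      by (simp add: frequently_cofinite)
    moreover have "finite (f ` {n. h (f n) = p})"
      using assms by (meson finite_subset image_subsetI)
    ultimately obtain n0 where "h (f n0) = p" "infinite {n \<in> {n. h (f n) = p}. f n = f n0}"
      using pigeonhole_infinite by blast
    then have "h (f n0) = p" "infinite {n. f n = f n0}"
      by (auto elim: infinite_super[rotated])
    then show "p \<in> h ` {q. \<exists>\<^sub>\<infinity>n. f n = q}"
      by (auto simp: frequently_cofinite)
  qed
qed

lemma Inf_states_hom: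
  assumes "dts \<Sigma> Q \<delta> q0" "dts_hom \<Sigma> Q \<delta> q0 Q' \<delta>' q0' h" "\<alpha> \<in> omega_words \<Sigma>"
  shows "Inf_states \<delta>' q0' \<alpha> = h ` Inf_states \<delta> q0 \<alpha>"
proof -
  have "finite Q"
    using assms(1) by (simp add: dts_def)
  then show ?thesis
    unfolding Inf_states_def run_hom[OF assms]
    by (rule frequently_values_image) (rule run_in_states[OF assms(1,3)])
qed

lemma dpa_lang_hom:
  assumes "dts \<Sigma> Q \<delta> q0" "dts_hom \<Sigma> Q \<delta> q0 Q' \<delta>' q0' h"
  shows "dpa_lang \<Sigma> \<delta>' q0' c' = dpa_lang \<Sigma> \<delta> q0 (c' \<circ> h)"
  using Inf_states_hom[OF assms] by (auto simp: dpa_lang_def image_comp)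

lemma consistent_image_iff:
  assumes "\<And>\<alpha>. \<alpha> \<in> A \<union> B \<Longrightarrow> g \<alpha> \<subseteq> Q'"
  shows "consistent c' {R'. R' \<subseteq> Q' \<and> (\<exists>\<alpha> \<in> A. g \<alpha> = R')} {R'. R' \<subseteq> Q' \<and> (\<exists>\<alpha> \<in> B. g \<alpha> = R')}
    \<longleftrightarrow> (\<forall>\<alpha> \<in> A. even (Max (c' ` g \<alpha>))) \<and> (\<forall>\<alpha> \<in> B. odd (Max (c' ` g \<alpha>)))"
  using assms unfolding consistent_def by blast

theorem lemma1:
  fixes \<Sigma> :: "'a set"
    and Q :: "'q set" and \<delta> :: "'q \<Rightarrow> 'a \<Rightarrow> 'q" and q0 :: 'q and c :: "'q \<Rightarrow> nat"
    and QD :: "'d set" and \<delta>D :: "'d \<Rightarrow> 'a \<Rightarrow> 'd" and qD0 :: 'd and cD :: "'d \<Rightarrow> nat"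
    and Q' :: "'p set" and \<delta>' :: "'p \<Rightarrow> 'a \<Rightarrow> 'p" and q0' :: 'p
    and h :: "'q \<Rightarrow> 'p" and c' :: "'p \<Rightarrow> nat"
    and D :: "(nat \<Rightarrow> 'a) set"
  assumes "dts \<Sigma> Q \<delta> q0"
    and "dts \<Sigma> QD \<delta>D qD0"
    and "D = dpa_lang \<Sigma> \<delta>D qD0 cD"
    and "dts \<Sigma> Q' \<delta>' q0'"
    and "dts_hom \<Sigma> Q \<delta> q0 Q' \<delta>' q0' h"
    and "h ` Q = Q'"
  shows "equiv_mod D (dpa_lang \<Sigma> \<delta>' q0' c') (dpa_lang \<Sigma> \<delta> q0 c) \<longleftrightarrow>
    consistent c'
      {R'. R' \<subseteq> Q' \<and> (\<exists>\<alpha> \<in> dpa_lang \<Sigma> \<delta> q0 c - D. h ` Inf_states \<delta> q0 \<alpha> = R')}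
      {R'. R' \<subseteq> Q' \<and> (\<exists>\<alpha> \<in> (omega_words \<Sigma> - dpa_lang \<Sigma> \<delta> q0 c) - D. h ` Inf_states \<delta> q0 \<alpha> = R')}"
proof -
  have "h ` Inf_states \<delta> q0 \<alpha> \<subseteq> Q'" if "\<alpha> \<in> omega_words \<Sigma>" for \<alpha>
    using Inf_states_subset[OF assms(1) that] assms(5) by (auto simp: dts_hom_def)
  then have "consistent c'
      {R'. R' \<subseteq> Q' \<and> (\<exists>\<alpha> \<in> dpa_lang \<Sigma> \<delta> q0 c - D. h ` Inf_states \<delta> q0 \<alpha> = R')}
      {R'. R' \<subseteq> Q' \<and> (\<exists>\<alpha> \<in> (omega_words \<Sigma> - dpa_lang \<Sigma> \<delta> q0 c) - D. h ` Inf_states \<delta> q0 \<alpha> = R')}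
    \<longleftrightarrow> (\<forall>\<alpha> \<in> dpa_lang \<Sigma> \<delta> q0 c - D. \<alpha> \<in> dpa_lang \<Sigma> \<delta> q0 (c' \<circ> h)) \<and>
        (\<forall>\<alpha> \<in> (omega_words \<Sigma> - dpa_lang \<Sigma> \<delta> q0 c) - D. \<alpha> \<notin> dpa_lang \<Sigma> \<delta> q0 (c' \<circ> h))"
    by (subst consistent_image_iff) (auto simp: dpa_lang_def image_comp)
  moreover have "equiv_mod D (dpa_lang \<Sigma> \<delta> q0 (c' \<circ> h)) (dpa_lang \<Sigma> \<delta> q0 c) \<longleftrightarrow>
      (\<forall>\<alpha> \<in> dpa_lang \<Sigma> \<delta> q0 c - D. \<alpha> \<in> dpa_lang \<Sigma> \<delta> q0 (c' \<circ> h)) \<and>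
      (\<forall>\<alpha> \<in> (omega_words \<Sigma> - dpa_lang \<Sigma> \<delta> q0 c) - D. \<alpha> \<notin> dpa_lang \<Sigma> \<delta> q0 (c' \<circ> h))"
    by (auto simp: equiv_mod_def dpa_lang_def)
  ultimately show ?thesis
    using dpa_lang_hom[OF assms(1,5)] by simp
qed

end
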